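(* Let $Q$ be a Jordan loop and $x\in Q$. Then (i) $(x^2)^{-1}x=x^{-1}$; (ii) $x^3x^{-2}=x$; (iii) $x^3x^{-1}=x^2$; (iv) $x^4(x^{-1})^3=x$; (v) $x^6x^{-2}=x^4$; (vi) $x^6x^{-4}=x^2$.
   Context: A loop is a set $Q$ with a binary operation (juxtaposition) and neutral element $e$ such that for all $a,b$ the equations $ax=b$, $ya=b$ have unique solutions. A Jordan loop is a commutative loop satisfying $x^2(yx)=(x^2y)x$. For $y\in Q$ and $k\ge 0$, $y^k$ denotes the right-associated product $y(y(\cdots(ye)\cdots))$ with $k$ factors $y$. Each $x$ has a unique two-sided inverse $x^{-1}$, and for $k\ge 1$, $x^{-k}$ denotes $(x^{-1})^k$. *)

theory Defs
  imports Main
begin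

definition loop :: "('a \<Rightarrow> 'a \<Rightarrow> 'a) \<Rightarrow> 'a \<Rightarrow> bool" where
  "loop m e \<longleftrightarrow> (\<forall>a. m e a = a \<and> m a e = a) \<and>
     (\<forall>a b. \<exists>!x. m a x = b) \<and> (\<forall>a b. \<exists>!y. m y a = b)"

definition jordan_loop :: "('a \<Rightarrow> 'a \<Rightarrow> 'a) \<Rightarrow> 'a \<Rightarrow> bool" where
  "jordan_loop m e \<longleftrightarrow> loop m e \<and> (\<forall>a b. m a b = m b a) \<and>
     (\<forall>x y. m (m (m x x) y) x = m (m x x) (m y x))"

primrec lpow :: "('a \<Rightarrow> 'a \<Rightarrow> 'a) \<Rightarrow> 'a \<Rightarrow> 'a \<Rightarrow> nat \<Rightarrow> 'a" where
  "lpow m e y 0 = e"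
| "lpow m e y (Suc k) = m y (lpow m e y k)"

definition linv :: "('a \<Rightarrow> 'a \<Rightarrow> 'a) \<Rightarrow> 'a \<Rightarrow> 'a \<Rightarrow> 'a" where
  "linv m e x = (THE y. m x y = e \<and> m y x = e)"

text \<open>x^(-k) = (x^(-1))^k\<close>
definition lnpow :: "('a \<Rightarrow> 'a \<Rightarrow> 'a) \<Rightarrow> 'a \<Rightarrow> 'a \<Rightarrow> nat \<Rightarrow> 'a" where
  "lnpow m e x k = lpow m e (linv m e x) k"

end

theory Submission
  imports Defs
begin

text \<open>
  Writing the Jordan identity as \<open>x (x\<^sup>2 y) = x\<^sup>2 (x y)\<close>, left multiplication by \<open>x\<close>
  commutes with left multiplication by \<open>x\<^sup>2\<close>. Every identity is obtained by applying
  this commutation to a suitable \<open>y\<close> (for the element \<open>x\<close>, \<open>x\<^sup>2\<close> or \<open>x\<^sup>-\<^sup>1\<close>) and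
  cancelling. In particular \<open>x\<^sup>2 x\<^sup>k = x\<^sup>k\<^sup>+\<^sup>2\<close>, so the powers of \<open>x\<^sup>2\<close> are the
  even powers of \<open>x\<close>, and \<open>(x\<^sup>2)\<^sup>-\<^sup>1 = (x\<^sup>-\<^sup>1)\<^sup>2\<close>; hence (v) and (vi) are
  (iii) and (ii) applied to \<open>x\<^sup>2\<close>.
\<close>

locale comm_loop =
  fixes mult :: "'a \<Rightarrow> 'a \<Rightarrow> 'a" (infixl "\<cdot>" 70) and e :: 'a
  assumes loop: "loop (\<cdot>) e"
    and comm: "a \<cdot> b = b \<cdot> a"
begin

abbreviation loop_power :: "'a \<Rightarrow> nat \<Rightarrow> 'a" ("_\<^bsup>_\<^esup>" [1000, 0] 1000)
  where "x\<^bsup>k\<^esup> \<equiv> lpow (\<cdot>) e x k"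

abbreviation loop_inverse :: "'a \<Rightarrow> 'a" ("_\<^sup>-\<^sup>1" [1000] 1000)
  where "x\<^sup>-\<^sup>1 \<equiv> linv (\<cdot>) e x"

lemma unit_left [simp]: "e \<cdot> a = a"
  and unit_right [simp]: "a \<cdot> e = a"
  using loop unfolding loop_def by auto

lemma cancel_left: "a \<cdot> b = a \<cdot> c \<Longrightarrow> b = c"
  using loop unfolding loop_def by metis

lemma inv_unique:
  assumes "x \<cdot> y = e"
  shows "x\<^sup>-\<^sup>1 = y"
  unfolding linv_def
proof (rule the_equality)
  show "x \<cdot> y = e \<and> y \<cdot> x = e"
    using assms comm by metis
  show "z = y" if "x \<cdot> z = e \<and> z \<cdot> x = e" for z
    using that assms cancel_left by metis
qed

lemma mult_inv [simp]: "x \<cdot> x\<^sup>-\<^sup>1 = e"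
proof -
  obtain y where "x \<cdot> y = e"
    using loop unfolding loop_def by blast
  then show ?thesis
    using inv_unique by simp
qed

lemma inv_mult [simp]: "x\<^sup>-\<^sup>1 \<cdot> x = e"
  using comm mult_inv by metis

lemma inv_inv [simp]: "(x\<^sup>-\<^sup>1)\<^sup>-\<^sup>1 = x"
  using inv_unique inv_mult by blast

lemma pow_two: "x\<^bsup>2\<^esup> = x \<cdot> x"
  unfolding numeral_2_eq_2 by simp

end

locale jordan = comm_loop +
  assumes jordan_identity: "((x \<cdot> x) \<cdot> y) \<cdot> x = (x \<cdot> x) \<cdot> (y \<cdot> x)"
begin

lemma square_mult_commute: "x \<cdot> (x\<^bsup>2\<^esup> \<cdot> y) = x\<^bsup>2\<^esup> \<cdot> (x \<cdot> y)"
  using jordan_identity comm by (metis pow_two)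

lemma square_mult_pow: "x\<^bsup>2\<^esup> \<cdot> x\<^bsup>k\<^esup> = x\<^bsup>k + 2\<^esup>"
proof (induction k)
  case 0
  show ?case by (simp add: pow_two)
next
  case (Suc k)
  have "x\<^bsup>2\<^esup> \<cdot> x\<^bsup>Suc k\<^esup> = x \<cdot> (x\<^bsup>2\<^esup> \<cdot> x\<^bsup>k\<^esup>)"
    by (simp add: square_mult_commute)
  then show ?case
    by (simp add: Suc.IH)
qed

lemma pow_of_square: "(x\<^bsup>2\<^esup>)\<^bsup>k\<^esup> = x\<^bsup>2 * k\<^esup>"
  by (induction k) (simp_all add: square_mult_pow add.commute)

lemma square_mult_inv: "x\<^bsup>2\<^esup> \<cdot> x\<^sup>-\<^sup>1 = x"
proof -
  have "x \<cdot> (x\<^bsup>2\<^esup> \<cdot> x\<^sup>-\<^sup>1) = x \<cdot> x"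
    by (simp add: square_mult_commute) (simp add: pow_two)
  then show ?thesis
    by (rule cancel_left)
qed

lemma square_mult_inv_square: "x\<^bsup>2\<^esup> \<cdot> (x\<^sup>-\<^sup>1)\<^bsup>2\<^esup> = e"
proof -
  have "x \<cdot> (x\<^bsup>2\<^esup> \<cdot> (x\<^sup>-\<^sup>1)\<^bsup>2\<^esup>) = x\<^bsup>2\<^esup> \<cdot> x\<^sup>-\<^sup>1"
    using square_mult_inv[of "x\<^sup>-\<^sup>1"] by (simp add: square_mult_commute comm)
  then show ?thesis
    using square_mult_inv cancel_left unit_right by metis
qed

lemma inv_square: "(x\<^bsup>2\<^esup>)\<^sup>-\<^sup>1 = (x\<^sup>-\<^sup>1)\<^bsup>2\<^esup>"
  using inv_unique square_mult_inv_square by blast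

lemma square_mult_commute_pow4: "x\<^bsup>2\<^esup> \<cdot> (x\<^bsup>4\<^esup> \<cdot> y) = x\<^bsup>4\<^esup> \<cdot> (x\<^bsup>2\<^esup> \<cdot> y)"
  using square_mult_commute[of "x\<^bsup>2\<^esup>"] pow_of_square[of x 2] by simp

lemma pow4_mult_inv_square: "x\<^bsup>4\<^esup> \<cdot> (x\<^sup>-\<^sup>1)\<^bsup>2\<^esup> = x\<^bsup>2\<^esup>"
proof -
  have "x\<^bsup>2\<^esup> \<cdot> (x\<^bsup>4\<^esup> \<cdot> (x\<^sup>-\<^sup>1)\<^bsup>2\<^esup>) = x\<^bsup>2\<^esup> \<cdot> x\<^bsup>2\<^esup>"
    using square_mult_pow[of x 2] by (simp add: square_mult_commute_pow4 square_mult_inv_square)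
  then show ?thesis
    by (rule cancel_left)
qed

lemma pow4_mult_inv: "x\<^bsup>4\<^esup> \<cdot> x\<^sup>-\<^sup>1 = x\<^bsup>3\<^esup>"
proof -
  have "x\<^bsup>2\<^esup> \<cdot> (x\<^bsup>4\<^esup> \<cdot> x\<^sup>-\<^sup>1) = x\<^bsup>4\<^esup> \<cdot> x"
    by (simp add: square_mult_commute_pow4 square_mult_inv)
  also have "\<dots> = x\<^bsup>2\<^esup> \<cdot> x\<^bsup>3\<^esup>"
    using square_mult_pow[of x 3] by (simp add: comm numeral_eq_Suc)
  finally show ?thesis
    by (rule cancel_left)
qed

lemma pow3_mult_inv_square: "x\<^bsup>3\<^esup> \<cdot> (x\<^sup>-\<^sup>1)\<^bsup>2\<^esup> = x"
proof -
  have "(x\<^sup>-\<^sup>1)\<^bsup>2\<^esup> \<cdot> x\<^bsup>3\<^esup> = (x\<^sup>-\<^sup>1)\<^bsup>2\<^esup> \<cdot> (x\<^sup>-\<^sup>1 \<cdot> x\<^bsup>4\<^esup>)"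
    using pow4_mult_inv comm by metis
  also have "\<dots> = x\<^sup>-\<^sup>1 \<cdot> ((x\<^sup>-\<^sup>1)\<^bsup>2\<^esup> \<cdot> x\<^bsup>4\<^esup>)"
    by (simp add: square_mult_commute)
  also have "\<dots> = x"
    using square_mult_inv[of x] by (simp add: pow4_mult_inv_square comm)
  finally show ?thesis
    by (simp add: comm)
qed

lemma pow3_mult_inv: "x\<^bsup>3\<^esup> \<cdot> x\<^sup>-\<^sup>1 = x\<^bsup>2\<^esup>"
proof -
  have "(x\<^sup>-\<^sup>1)\<^bsup>2\<^esup> \<cdot> (x\<^sup>-\<^sup>1 \<cdot> x\<^bsup>3\<^esup>) = x\<^sup>-\<^sup>1 \<cdot> ((x\<^sup>-\<^sup>1)\<^bsup>2\<^esup> \<cdot> x\<^bsup>3\<^esup>)"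
    by (simp add: square_mult_commute)
  also have "\<dots> = (x\<^sup>-\<^sup>1)\<^bsup>2\<^esup> \<cdot> x\<^bsup>2\<^esup>"
    using pow3_mult_inv_square square_mult_inv_square by (simp add: comm)
  finally show ?thesis
    using cancel_left comm by metis
qed

lemma inv_square_mult: "(x\<^bsup>2\<^esup>)\<^sup>-\<^sup>1 \<cdot> x = x\<^sup>-\<^sup>1"
  using square_mult_inv[of "x\<^sup>-\<^sup>1"] by (simp add: inv_square)

lemma pow4_mult_inv_cube: "x\<^bsup>4\<^esup> \<cdot> (x\<^sup>-\<^sup>1)\<^bsup>3\<^esup> = x"
proof -
  have "x\<^bsup>2\<^esup> \<cdot> (x\<^bsup>4\<^esup> \<cdot> (x\<^sup>-\<^sup>1)\<^bsup>3\<^esup>) = x\<^bsup>4\<^esup> \<cdot> x\<^sup>-\<^sup>1"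
    using pow3_mult_inv_square[of "x\<^sup>-\<^sup>1"] by (simp add: square_mult_commute_pow4 comm)
  also have "\<dots> = x\<^bsup>3\<^esup>"
    by (rule pow4_mult_inv)
  also have "\<dots> = x\<^bsup>2\<^esup> \<cdot> x"
    using square_mult_pow[of x 1] by (simp add: numeral_eq_Suc)
  finally show ?thesis
    by (rule cancel_left)
qed

lemma pow6_mult_inv_square: "x\<^bsup>6\<^esup> \<cdot> (x\<^sup>-\<^sup>1)\<^bsup>2\<^esup> = x\<^bsup>4\<^esup>"
  using pow3_mult_inv[of "x\<^bsup>2\<^esup>"] by (simp add: pow_of_square inv_square)

lemma pow6_mult_inv_pow4: "x\<^bsup>6\<^esup> \<cdot> (x\<^sup>-\<^sup>1)\<^bsup>4\<^esup> = x\<^bsup>2\<^esup>"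
  using pow3_mult_inv_square[of "x\<^bsup>2\<^esup>"] by (simp add: pow_of_square inv_square)

end

theorem lemma2p7:
  fixes m :: "'a \<Rightarrow> 'a \<Rightarrow> 'a" and e :: 'a and x :: 'a
  assumes "jordan_loop m e"
  shows "m (linv m e (lpow m e x 2)) x = linv m e x \<and>
     m (lpow m e x 3) (lnpow m e x 2) = x \<and>
     m (lpow m e x 3) (lnpow m e x 1) = lpow m e x 2 \<and>
     m (lpow m e x 4) (lpow m e (linv m e x) 3) = x \<and>
     m (lpow m e x 6) (lnpow m e x 2) = lpow m e x 4 \<and>
     m (lpow m e x 6) (lnpow m e x 4) = lpow m e x 2"
proof -
  interpret jordan m e
    using assms unfolding jordan_loop_def by unfold_locales auto
  show ?thesis
    unfolding lnpow_def
    by (simp add: inv_square_mult pow3_mult_inv_square pow3_mult_inv pow4_mult_inv_cube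
        pow6_mult_inv_square pow6_mult_inv_pow4)
qed

end
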